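(* Let $0<\epsilon\le 1/2$. Then $r_{\mathrm{bif}}(-\epsilon)\le 1/4+\epsilon-\epsilon^2$.
   Context: $f_c(z)=z^2+c$, extended to $\widehat{\mathbb{C}}$ by $f_c(\infty)=\infty$. For $c\in\mathbb{C}$, $r\ge0$, $G_{c,r}$ is the semigroup under composition generated by $\{f_{c'}:|c'-c|\le r\}$. A minimal set of a polynomial semigroup $G$ is a minimal element, with respect to inclusion, of the family of non-empty compact $L\subset\widehat{\mathbb{C}}$ with $g(L)\subset L$ for all $g\in G$; it is planar if $\infty\notin L$. The bifurcation radius $r_{\mathrm{bif}}(c)$ is the supremum of those $r\ge0$ for which $G_{c,r}$ has a planar minimal set (equivalently the infimum of those $r\ge0$ for which $G_{c,r}$ has no planar minimal set); by prior work this value is attained and $G_{c,r}$ has a planar minimal set iff $r\le r_{\mathrm{bif}}(c)$. *)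

theory Defs
  imports "HOL-Analysis.Analysis"
begin

definition quad :: "complex \<Rightarrow> complex \<Rightarrow> complex" where
  "quad c z = z\<^sup>2 + c"

inductive_set gen_semigroup :: "('a \<Rightarrow> 'a) set \<Rightarrow> ('a \<Rightarrow> 'a) set"
  for S :: "('a \<Rightarrow> 'a) set" where
  gen: "f \<in> S \<Longrightarrow> f \<in> gen_semigroup S"
| comp: "g \<in> gen_semigroup S \<Longrightarrow> h \<in> gen_semigroup S \<Longrightarrow> g \<circ> h \<in> gen_semigroup S"

definition G :: "complex \<Rightarrow> real \<Rightarrow> (complex \<Rightarrow> complex) set" where
  "G c r = gen_semigroup {quad c' | c'. cmod (c' - c) \<le> r}"

definition invariant_compact :: "(complex \<Rightarrow> complex) set \<Rightarrow> complex set \<Rightarrow> bool" where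
  "invariant_compact Gr L \<longleftrightarrow> L \<noteq> {} \<and> compact L \<and> (\<forall>g\<in>Gr. g ` L \<subseteq> L)"

(* planar minimal set: minimal set of the semigroup on the Riemann sphere not containing \<infinity>.
   Any compact invariant subset of a planar set is planar, so minimality only needs to be
   tested against subsets of L, all of which lie in the plane. *)
definition planar_minimal_set :: "(complex \<Rightarrow> complex) set \<Rightarrow> complex set \<Rightarrow> bool" where
  "planar_minimal_set Gr L \<longleftrightarrow> invariant_compact Gr L \<and>
     (\<forall>K. K \<subseteq> L \<and> invariant_compact Gr K \<longrightarrow> K = L)"

definition r_bif :: "complex \<Rightarrow> real" where
  "r_bif c = Sup {r. r \<ge> 0 \<and> (\<exists>L. planar_minimal_set (G c r) L)}"

end

theory Submission
  imports Defs
begin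

(* Suppose r > 1/4 + eps - eps^2, so that r > eps and r > 1/4, and let L be a nonempty compact
   set invariant under every z^2 + c' with |c' + eps| <= r.  Comparing a point of maximal
   modulus with its image under a parameter pushing it outwards shows L lies in the unit disk;
   then a point of minimal modulus is either sent to 0 or pulled closer to 0, so 0 is in L.
   The parameter disk contains r u for both primitive cube roots of unity u, and
   (t u)^2 + r u^2 = (t^2 + r) u^2 with u^2 again a primitive cube root.  Hence the orbit of 0
   contains points of modulus t_n, where t_0 = 0 and t_(n+1) = t_n^2 + r >= t_n + (r - 1/4),
   which is unbounded: no such L exists. *)

lemma gen_semigroup_fixes:
  assumes "\<And>f. f \<in> S \<Longrightarrow> f p = p" and "g \<in> gen_semigroup S"
  shows "g p = p"
  using assms(2) by induction (simp_all add: assms(1))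

lemma quad_has_fixed_point: "\<exists>p. quad c p = p"
proof
  let ?s = "csqrt (1 - 4 * c)"
  show "quad c ((1 - ?s) / 2) = (1 - ?s) / 2"
    by (simp add: quad_def power2_eq_square field_simps) (simp add: algebra_simps flip: power2_eq_square)
qed

lemma planar_minimal_set_G_zero: "\<exists>L. planar_minimal_set (G c 0) L"
proof -
  obtain p where p: "quad c p = p"
    using quad_has_fixed_point by blast
  have "g p = p" if "g \<in> G c 0" for g
    using that unfolding G_def by (rule gen_semigroup_fixes[rotated]) (auto simp: p)
  then have "planar_minimal_set (G c 0) {p}"
    by (auto simp: planar_minimal_set_def invariant_compact_def)
  then show ?thesis ..
qed

lemma invariant_compact_G_quad_mem:
  assumes "invariant_compact (G c r) L" and "cmod (c' - c) \<le> r" and "z \<in> L"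
  shows "z\<^sup>2 + c' \<in> L"
proof -
  have "quad c' \<in> G c r"
    unfolding G_def using assms(2) by (blast intro: gen_semigroup.gen)
  then show ?thesis
    using assms(1,3) by (force simp: invariant_compact_def quad_def)
qed

lemma exists_unit_norm_add:
  fixes w :: complex
  assumes "- cmod w \<le> s"
  shows "\<exists>u. cmod u = 1 \<and> cmod (w + of_real s * u) = cmod w + s"
proof (cases "w = 0")
  case True
  then show ?thesis using assms by (intro exI[of _ 1]) simp
next
  case False
  have "w + of_real s * sgn w = of_real (cmod w + s) * sgn w"
    by (simp add: sgn_div_norm distrib_right scaleR_conv_of_real field_simps False)
  then show ?thesis
    using False assms by (intro exI[of _ "sgn w"]) (simp add: norm_mult norm_sgn del: of_real_add)
qed

lemma invariant_compact_G_norm_lt_one: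
  assumes inv: "invariant_compact (G c r) L" and "cmod c < r" and "z \<in> L"
  shows "cmod z < 1"
proof -
  from inv have "compact L" "L \<noteq> {}"
    by (auto simp: invariant_compact_def)
  then obtain z0 where "z0 \<in> L" and z0_max: "\<And>y. y \<in> L \<Longrightarrow> cmod y \<le> cmod z0"
    using continuous_attains_sup[of L cmod] continuous_on_norm_id by blast
  define M where "M = cmod z0"
  have "0 < r"
    using \<open>cmod c < r\<close> norm_ge_zero order_le_less_trans by blast
  then have r_ge: "- cmod (z0\<^sup>2) \<le> r"
    using norm_ge_zero[of "z0\<^sup>2"] by linarith
  obtain u where "cmod u = 1" and u: "cmod (z0\<^sup>2 + of_real r * u) = M\<^sup>2 + r"
    using exists_unit_norm_add[OF r_ge] by (auto simp: M_def norm_power)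
  have "z0\<^sup>2 + (c + of_real r * u) \<in> L"
    using invariant_compact_G_quad_mem[OF inv _ \<open>z0 \<in> L\<close>, of "c + of_real r * u"]
      \<open>cmod u = 1\<close> \<open>0 < r\<close> by (simp add: norm_mult)
  then have "cmod (z0\<^sup>2 + (c + of_real r * u)) \<le> M"
    using z0_max M_def by blast
  moreover have "M\<^sup>2 + r \<le> cmod (z0\<^sup>2 + (c + of_real r * u)) + cmod c"
    using u norm_triangle_ineq4[of "z0\<^sup>2 + (c + of_real r * u)" c] by (simp add: algebra_simps)
  ultimately have "M\<^sup>2 < M"
    using \<open>cmod c < r\<close> by linarith
  then have "M < 1"
    using mult_left_mono[of 1 M M] by (force simp: power2_eq_square M_def)
  then show ?thesis
    using z0_max[OF \<open>z \<in> L\<close>] M_def by linarith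
qed

lemma invariant_compact_G_zero_mem:
  assumes inv: "invariant_compact (G c r) L" and "cmod c < r"
  shows "0 \<in> L"
proof (rule ccontr)
  assume "0 \<notin> L"
  from inv have "compact L" "L \<noteq> {}"
    by (auto simp: invariant_compact_def)
  then obtain z1 where "z1 \<in> L" and z1_min: "\<And>y. y \<in> L \<Longrightarrow> cmod z1 \<le> cmod y"
    using continuous_attains_inf[of L cmod] continuous_on_norm_id by blast
  define m where "m = cmod z1"
  define b where "b = z1\<^sup>2 + c"
  have "0 < r"
    using \<open>cmod c < r\<close> norm_ge_zero order_le_less_trans by blast
  have "r < cmod b"
  proof (rule ccontr)
    assume "\<not> r < cmod b"
    then have "z1\<^sup>2 + - z1\<^sup>2 \<in> L"
      using invariant_compact_G_quad_mem[OF inv _ \<open>z1 \<in> L\<close>, of "- z1\<^sup>2"]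
      by (simp add: b_def norm_minus_commute add.commute)
    with \<open>0 \<notin> L\<close> show False by simp
  qed
  then obtain u where "cmod u = 1" and u: "cmod (b + of_real (- r) * u) = cmod b - r"
    using exists_unit_norm_add[of b "- r"] by auto
  have "z1\<^sup>2 + (c - of_real r * u) \<in> L"
    using invariant_compact_G_quad_mem[OF inv _ \<open>z1 \<in> L\<close>, of "c - of_real r * u"]
      \<open>cmod u = 1\<close> \<open>0 < r\<close> by (simp add: norm_mult)
  then have "m \<le> cmod (b + of_real (- r) * u)"
    using z1_min by (simp add: m_def b_def algebra_simps)
  moreover have "cmod b \<le> m\<^sup>2 + cmod c"
    using norm_triangle_ineq[of "z1\<^sup>2" c] by (simp add: b_def m_def norm_power)
  ultimately have "m < m\<^sup>2"
    using u \<open>cmod c < r\<close> by linarith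
  moreover have "m < 1"
    using invariant_compact_G_norm_lt_one[OF assms \<open>z1 \<in> L\<close>] by (simp add: m_def)
  ultimately show False
    using mult_left_mono[of m 1 m] by (simp add: power2_eq_square m_def)
qed

lemma primitive_cube_root_exists: "\<exists>u :: complex. u\<^sup>2 + u + 1 = 0"
proof
  let ?s = "csqrt (- 3)"
  have "((- 1 + ?s) / 2)\<^sup>2 + (- 1 + ?s) / 2 + 1 = (?s\<^sup>2 + 3) / 4"
    by (simp add: power2_eq_square field_simps del: csqrt_of_real_nonpos)
  then show "((- 1 + ?s) / 2)\<^sup>2 + (- 1 + ?s) / 2 + 1 = 0"
    by (simp only: power2_csqrt) simp
qed

lemma primitive_cube_root_square:
  fixes u :: "'a :: comm_ring_1"
  assumes "u\<^sup>2 + u + 1 = 0"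
  shows "(u\<^sup>2)\<^sup>2 + u\<^sup>2 + 1 = 0"
proof -
  have "(u\<^sup>2)\<^sup>2 + u\<^sup>2 + 1 = (u\<^sup>2 + u + 1) * (u\<^sup>2 - u + 1)"
    by (simp add: power2_eq_square algebra_simps)
  then show ?thesis
    using assms by simp
qed

lemma primitive_cube_root_cube:
  fixes u :: "'a :: comm_ring_1"
  assumes "u\<^sup>2 + u + 1 = 0"
  shows "u ^ 3 = 1"
proof -
  have "u ^ 3 - 1 = (u - 1) * (u\<^sup>2 + u + 1)"
    by (simp add: power2_eq_square power3_eq_cube algebra_simps)
  then show ?thesis
    using assms by simp
qed

lemma norm_primitive_cube_root:
  fixes u :: "'a :: real_normed_field"
  assumes "u\<^sup>2 + u + 1 = 0"
  shows "norm u = 1"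
proof -
  have "norm u ^ 3 = 1 ^ 3"
    using norm_power[of u 3] primitive_cube_root_cube[OF assms] by simp
  then show ?thesis
    by (rule power_eq_imp_eq_base) simp_all
qed

lemma Re_primitive_cube_root:
  assumes "u\<^sup>2 + u + 1 = 0"
  shows "Re u = - 1/2"
proof -
  have "u * cnj u = 1"
    using complex_norm_square[of u] norm_primitive_cube_root[OF assms] by simp
  have "cnj u = cnj u * u ^ 3"
    using primitive_cube_root_cube[OF assms] by simp
  also have "\<dots> = (u * cnj u) * u\<^sup>2"
    by (simp add: power3_eq_cube power2_eq_square ac_simps)
  also have "\<dots> = u\<^sup>2"
    using \<open>u * cnj u = 1\<close> by simp
  finally have "u + cnj u = (u\<^sup>2 + u + 1) - 1"
    by simp
  then have "complex_of_real (2 * Re u) = - 1"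
    using assms by (simp only: complex_add_cnj) simp
  then show ?thesis
    by (simp add: complex_eq_iff)
qed

lemma norm_power2_scaled_primitive_cube_root_add:
  assumes "u\<^sup>2 + u + 1 = 0"
  shows "(cmod (of_real r * u + of_real e))\<^sup>2 = r\<^sup>2 - r * e + e\<^sup>2"
proof -
  have "(Re u)\<^sup>2 + (Im u)\<^sup>2 = 1"
    using cmod_power2[of u] norm_primitive_cube_root[OF assms] by simp
  then have Im_sq: "(Im u)\<^sup>2 = 3/4"
    using Re_primitive_cube_root[OF assms] by (simp add: power2_eq_square)
  have "(cmod (of_real r * u + of_real e))\<^sup>2 = (r * Re u + e)\<^sup>2 + r\<^sup>2 * (Im u)\<^sup>2"
    by (simp add: cmod_power2 power_mult_distrib)
  also have "\<dots> = (e - r / 2)\<^sup>2 + r\<^sup>2 * (3 / 4)"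
    using Re_primitive_cube_root[OF assms] Im_sq by simp
  also have "\<dots> = r\<^sup>2 - r * e + e\<^sup>2"
    by (simp add: power2_eq_square field_simps)
  finally show ?thesis .
qed

lemma funpow_square_add_ge_linear:
  fixes r :: real
  shows "real n * (r - 1/4) \<le> ((\<lambda>x. x\<^sup>2 + r) ^^ n) 0"
proof (induction n)
  case (Suc n)
  let ?t = "((\<lambda>x. x\<^sup>2 + r) ^^ n) 0"
  have "real (Suc n) * (r - 1/4) = real n * (r - 1/4) + (r - 1/4)"
    by (simp add: algebra_simps)
  also have "\<dots> \<le> ?t + (r - 1/4)"
    using Suc.IH by simp
  also have "\<dots> \<le> ?t\<^sup>2 + r"
    using zero_le_power2[of "?t - 1/2"] by (simp add: power2_eq_square algebra_simps)
  finally show ?case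
    by simp
qed simp

lemma unbounded_if_closed_under_cube_root_constants:
  fixes L :: "complex set"
  assumes "0 \<in> L" and "1/4 < r"
    and closed: "\<And>u z. u\<^sup>2 + u + 1 = 0 \<Longrightarrow> z \<in> L \<Longrightarrow> z\<^sup>2 + of_real r * u \<in> L"
  shows "\<not> bounded L"
proof
  assume "bounded L"
  then obtain B where B: "\<And>z. z \<in> L \<Longrightarrow> cmod z \<le> B"
    by (auto simp: bounded_iff)
  define t where "t n = ((\<lambda>x. x\<^sup>2 + r) ^^ n) 0" for n
  have orbit: "\<exists>u. u\<^sup>2 + u + 1 = 0 \<and> of_real (t n) * u \<in> L" for n
  proof (induction n)
    case 0
    then show ?case
      using primitive_cube_root_exists \<open>0 \<in> L\<close> by (simp add: t_def)
  next
    case (Suc n)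
    then obtain u where u: "u\<^sup>2 + u + 1 = 0" "of_real (t n) * u \<in> L"
      by blast
    have "(of_real (t n) * u)\<^sup>2 + of_real r * u\<^sup>2 = of_real (t (Suc n)) * u\<^sup>2"
      by (simp add: t_def power_mult_distrib algebra_simps)
    moreover have "(of_real (t n) * u)\<^sup>2 + of_real r * u\<^sup>2 \<in> L"
      using closed[OF primitive_cube_root_square[OF u(1)] u(2)] .
    ultimately show ?case
      using primitive_cube_root_square[OF u(1)] by (intro exI[of _ "u\<^sup>2"]) simp
  qed
  obtain n where "B < real n * (r - 1/4)"
    using ex_less_of_nat_mult[of "r - 1/4" B] \<open>1/4 < r\<close> by auto
  also have "\<dots> \<le> t n"
    unfolding t_def by (rule funpow_square_add_ge_linear)
  finally have "B < t n" .
  obtain u where "u\<^sup>2 + u + 1 = 0" and "of_real (t n) * u \<in> L"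
    using orbit by blast
  then have "\<bar>t n\<bar> \<le> B"
    using B norm_primitive_cube_root by (fastforce simp: norm_mult)
  with \<open>B < t n\<close> show False
    by linarith
qed

lemma norm_scaled_primitive_cube_root_add_le:
  assumes "u\<^sup>2 + u + 1 = 0" and "0 \<le> e" and "e \<le> r"
  shows "cmod (of_real r * u + of_real e) \<le> r"
proof (rule power2_le_imp_le)
  show "(cmod (of_real r * u + of_real e))\<^sup>2 \<le> r\<^sup>2"
    using norm_power2_scaled_primitive_cube_root_add[OF assms(1)] mult_right_mono[OF assms(3,2)]
    by (simp add: power2_eq_square)
qed (use assms in simp)

lemma not_invariant_compact_G:
  assumes "cmod c < r" and "1/4 < r"
    and cube_roots: "\<And>u. u\<^sup>2 + u + 1 = 0 \<Longrightarrow> cmod (of_real r * u - c) \<le> r"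
  shows "\<not> invariant_compact (G c r) L"
proof
  assume inv: "invariant_compact (G c r) L"
  have "0 \<in> L"
    using inv \<open>cmod c < r\<close> by (rule invariant_compact_G_zero_mem)
  moreover have "bounded L"
    using inv by (simp add: invariant_compact_def compact_imp_bounded)
  moreover have "z\<^sup>2 + of_real r * u \<in> L" if "u\<^sup>2 + u + 1 = 0" and "z \<in> L" for u z
    using invariant_compact_G_quad_mem[OF inv cube_roots[OF that(1)] that(2)] .
  ultimately show False
    using unbounded_if_closed_under_cube_root_constants \<open>1/4 < r\<close> by blast
qed

theorem theorem4p14:
  fixes \<epsilon> :: real
  assumes "0 < \<epsilon>" and "\<epsilon> \<le> 1/2"
  shows "r_bif (- complex_of_real \<epsilon>) \<le> 1/4 + \<epsilon> - \<epsilon>\<^sup>2"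
  unfolding r_bif_def
proof (rule cSup_least)
  show "{r. r \<ge> 0 \<and> (\<exists>L. planar_minimal_set (G (- complex_of_real \<epsilon>) r) L)} \<noteq> {}"
    using planar_minimal_set_G_zero by blast
next
  fix r
  assume "r \<in> {r. r \<ge> 0 \<and> (\<exists>L. planar_minimal_set (G (- complex_of_real \<epsilon>) r) L)}"
  then obtain L where inv: "invariant_compact (G (- complex_of_real \<epsilon>) r) L"
    by (auto simp: planar_minimal_set_def)
  show "r \<le> 1/4 + \<epsilon> - \<epsilon>\<^sup>2"
  proof (rule ccontr)
    assume "\<not> r \<le> 1/4 + \<epsilon> - \<epsilon>\<^sup>2"
    moreover have "\<epsilon>\<^sup>2 \<le> (1/2)\<^sup>2" and "\<epsilon>\<^sup>2 \<le> \<epsilon>"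
      using assms power_mono[of \<epsilon> "1/2" 2] mult_left_mono[of \<epsilon> 1 \<epsilon>]
      by (simp_all add: power2_eq_square)
    ultimately have "\<epsilon> < r" and "1/4 < r"
      by (simp_all add: power2_eq_square)
    then have "\<not> invariant_compact (G (- complex_of_real \<epsilon>) r) L"
      using assms(1) by (intro not_invariant_compact_G) (simp_all add: norm_scaled_primitive_cube_root_add_le)
    then show False
      using inv by contradiction
  qed
qed

end
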